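(* Let $p$ be a prime and let $G$ be a finite abelian $p$-group of order $p^{n}$. Let $M(G)$ denote the Schur multiplier of $G$ and write $|M(G)|=p^{\frac{n(n-1)}{2}-t}$ (so $t$ is an integer). Suppose that the Frattini subgroup $\Phi(G)$ has order $p^{a}$ with $a\geq 1$. Then there exists $m\in\mathbb{N}_0$ such that $$n=\frac{a(a+1)+2t+2m}{2a}.$$
   Context: $\mathbb{N}_0$ denotes the set of nonnegative integers. The Schur multiplier of a group $G$ with free presentation $G\cong F/R$ ($F$ free) is $M(G)=(R\cap F')/[R,F]$. $\Phi(G)$ is the Frattini subgroup of $G$. *)

theory Defs
  imports Complex_Main "HOL-Algebra.Algebra"
begin

text \<open>A letter (x, True) stands for x, (x, False) for its formal inverse.\<close>

fun fg_push :: "('x \<times> bool) \<Rightarrow> ('x \<times> bool) list \<Rightarrow> ('x \<times> bool) list" where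
  "fg_push l [] = [l]"
| "fg_push l (y # ys) = (if fst l = fst y \<and> snd l \<noteq> snd y then ys else l # y # ys)"

definition fg_reduce :: "('x \<times> bool) list \<Rightarrow> ('x \<times> bool) list" where
  "fg_reduce w = foldr fg_push w []"

definition free_group :: "'x set \<Rightarrow> (('x \<times> bool) list) monoid" where
  "free_group Y = \<lparr> carrier = {w. fg_reduce w = w \<and> fst ` set w \<subseteq> Y},
                    monoid.mult = (\<lambda>u v. fg_reduce (u @ v)),
                    one = [] \<rparr>"

definition fg_eval :: "('a, 'b) monoid_scheme \<Rightarrow> ('a \<times> bool) list \<Rightarrow> 'a" where
  "fg_eval G w = foldr (\<lambda>l acc. (if snd l then fst l else inv\<^bsub>G\<^esub> (fst l)) \<otimes>\<^bsub>G\<^esub> acc) w \<one>\<^bsub>G\<^esub>"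

definition pres_F :: "('a, 'b) monoid_scheme \<Rightarrow> (('a \<times> bool) list) monoid" where
  "pres_F G = free_group (carrier G)"

definition pres_R :: "('a, 'b) monoid_scheme \<Rightarrow> ('a \<times> bool) list set" where
  "pres_R G = {w \<in> carrier (pres_F G). fg_eval G w = \<one>\<^bsub>G\<^esub>}"

definition mixed_commutator :: "('c, 'd) monoid_scheme \<Rightarrow> 'c set \<Rightarrow> 'c set \<Rightarrow> 'c set" where
  "mixed_commutator F A B = generate F
     (\<Union>r\<in>A. \<Union>f\<in>B. {r \<otimes>\<^bsub>F\<^esub> f \<otimes>\<^bsub>F\<^esub> inv\<^bsub>F\<^esub> r \<otimes>\<^bsub>F\<^esub> inv\<^bsub>F\<^esub> f})"

text \<open>M(G) = (R \<inter> F') / [R, F]; its carrier is the set of cosets of [R,F] in R \<inter> F'.\<close>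

definition schur_multiplier_carrier :: "('a, 'b) monoid_scheme \<Rightarrow> ('a \<times> bool) list set set" where
  "schur_multiplier_carrier G =
     (let F = pres_F G; R = pres_R G; K = mixed_commutator F R (carrier F)
      in (\<lambda>x. K #>\<^bsub>F\<^esub> x) ` (R \<inter> derived F (carrier F)))"

definition schur_multiplier_order :: "('a, 'b) monoid_scheme \<Rightarrow> nat" where
  "schur_multiplier_order G = card (schur_multiplier_carrier G)"

definition maximal_subgroup :: "'a set \<Rightarrow> ('a, 'b) monoid_scheme \<Rightarrow> bool" where
  "maximal_subgroup H G \<longleftrightarrow> subgroup H G \<and> H \<noteq> carrier G \<and>
     (\<forall>K. subgroup K G \<and> H \<subseteq> K \<longrightarrow> K = H \<or> K = carrier G)"

definition frattini :: "('a, 'b) monoid_scheme \<Rightarrow> 'a set" where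
  "frattini G = carrier G \<inter> \<Inter> {H. maximal_subgroup H G}"

end

theory Submission
  imports Defs
begin

text \<open>Choose characters f_1, ..., f_d : G \<rightarrow> \<int>/p and elements g_1, ..., g_d with
  f_i(g_j) = \<delta>_ij, with d as large as possible. Every maximal subgroup of a finite abelian
  p-group has index p, so an element of the common kernel of the f_i outside some maximal
  subgroup would yield a further character; hence that kernel lies in \<Phi>(G) and n \<le> d + a.
  The bilinear cocycle (x, y) \<mapsto> (f_i(x) f_j(y))_{i<j} defines a central extension of G by
  (\<int>/p)^(d choose 2) in which the commutator of lifts of g_i and g_j is the (i,j)-th basis
  vector. By Hopf's formula M(G) maps onto the image of R \<inter> F' in this extension, so
  |M(G)| \<ge> p^(d(d-1)/2) \<ge> p^((n-a)(n-a-1)/2), which is exactly the claimed integrality and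
  nonnegativity of m.\<close>

section \<open>Free groups\<close>

fun reduced :: "('x \<times> bool) list \<Rightarrow> bool" where
  "reduced (x # y # ys) \<longleftrightarrow> \<not> (fst x = fst y \<and> snd x \<noteq> snd y) \<and> reduced (y # ys)"
| "reduced _ \<longleftrightarrow> True"

definition fg_push_all :: "('x \<times> bool) list \<Rightarrow> ('x \<times> bool) list \<Rightarrow> ('x \<times> bool) list" where
  "fg_push_all u v = foldr fg_push u v"

definition inv_letter :: "'x \<times> bool \<Rightarrow> 'x \<times> bool" where
  "inv_letter l = (fst l, \<not> snd l)"

lemma fg_push_all_simps [simp]:
  "fg_push_all [] v = v"
  "fg_push_all (l # u) v = fg_push l (fg_push_all u v)"
  "fg_push_all (u @ u') v = fg_push_all u (fg_push_all u' v)"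
  by (simp_all add: fg_push_all_def)

lemma reduced_ConsD: "reduced (l # w) \<Longrightarrow> reduced w"
  by (cases w) auto

lemma reduced_fg_push: "reduced w \<Longrightarrow> reduced (fg_push l w)"
  by (cases w) (auto dest: reduced_ConsD)

lemma reduced_fg_push_all: "reduced v \<Longrightarrow> reduced (fg_push_all u v)"
  by (induction u) (auto intro: reduced_fg_push)

lemma fg_push_reduced: "reduced (l # w) \<Longrightarrow> fg_push l w = l # w"
  by (cases w) auto

lemma fg_push_all_Nil_reduced: "reduced w \<Longrightarrow> fg_push_all w [] = w"
proof (induction w)
  case (Cons l w)
  then show ?case
    using reduced_ConsD fg_push_reduced by fastforce
qed simp

lemma fg_reduce_eq_fg_push_all: "fg_reduce w = fg_push_all w []"
  by (simp add: fg_reduce_def fg_push_all_def)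

lemma fg_reduce_eq_iff_reduced: "fg_reduce w = w \<longleftrightarrow> reduced w"
  by (metis fg_reduce_eq_fg_push_all fg_push_all_Nil_reduced reduced.simps(2) reduced_fg_push_all)

lemma fg_push_inv_letter: "reduced w \<Longrightarrow> fg_push (inv_letter l) (fg_push l w) = w"
  by (cases w rule: reduced.cases) (auto simp: inv_letter_def)

lemma fg_push_all_fg_push: "reduced v \<Longrightarrow> fg_push_all (fg_push l w) v = fg_push l (fg_push_all w v)"
proof (cases w)
  case (Cons y ys)
  assume "reduced v"
  then have "fg_push (inv_letter y) (fg_push y (fg_push_all ys v)) = fg_push_all ys v"
    by (intro fg_push_inv_letter reduced_fg_push_all)
  then show ?thesis
    using Cons by (cases l, cases y) (auto simp: inv_letter_def)
qed simp

lemma fg_push_all_fg_reduce: "reduced v \<Longrightarrow> fg_push_all (fg_reduce u) v = fg_push_all u v"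
  by (induction u) (simp_all add: fg_reduce_eq_fg_push_all fg_push_all_fg_push)

lemma fg_push_all_inverse: "fg_push_all (rev (map inv_letter w)) w = []"
  by (induction w) (auto simp: inv_letter_def)

lemma set_fg_push_all: "set (fg_push_all u v) \<subseteq> set u \<union> set v"
proof (induction u)
  case (Cons l u)
  have "set (fg_push l w) \<subseteq> insert l (set w)" for w
    by (cases w) auto
  with Cons show ?case by fastforce
qed simp

lemma carrier_free_group: "w \<in> carrier (free_group Y) \<longleftrightarrow> reduced w \<and> fst ` set w \<subseteq> Y"
  by (simp add: free_group_def fg_reduce_eq_iff_reduced)

lemma mult_free_group:
  "v \<in> carrier (free_group Y) \<Longrightarrow> u \<otimes>\<^bsub>free_group Y\<^esub> v = fg_push_all u v"
  by (simp add: free_group_def fg_reduce_eq_fg_push_all)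

lemma one_free_group [simp]: "\<one>\<^bsub>free_group Y\<^esub> = []"
  by (simp add: free_group_def)

lemma fg_push_all_closed:
  assumes "u \<in> carrier (free_group Y)" "v \<in> carrier (free_group Y)"
  shows "fg_push_all u v \<in> carrier (free_group Y)"
  using assms set_fg_push_all[of u v] reduced_fg_push_all[of v u]
  unfolding carrier_free_group by blast

lemma group_free_group: "group (free_group Y)"
proof (rule groupI)
  show "\<one>\<^bsub>free_group Y\<^esub> \<in> carrier (free_group Y)"
    by (simp add: carrier_free_group)
next
  fix x y z assume xyz: "x \<in> carrier (free_group Y)" "y \<in> carrier (free_group Y)" "z \<in> carrier (free_group Y)"
  then show "x \<otimes>\<^bsub>free_group Y\<^esub> y \<in> carrier (free_group Y)"
    by (simp add: mult_free_group fg_push_all_closed)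
  have "fg_push_all (fg_push_all x y) z = fg_push_all x (fg_push_all y z)"
    using xyz fg_push_all_fg_reduce[of z "x @ y"]
    by (simp add: carrier_free_group fg_reduce_eq_fg_push_all fg_push_all_Nil_reduced)
  with xyz show "x \<otimes>\<^bsub>free_group Y\<^esub> y \<otimes>\<^bsub>free_group Y\<^esub> z = x \<otimes>\<^bsub>free_group Y\<^esub> (y \<otimes>\<^bsub>free_group Y\<^esub> z)"
    by (simp add: mult_free_group fg_push_all_closed)
next
  fix x assume x: "x \<in> carrier (free_group Y)"
  then show "\<one>\<^bsub>free_group Y\<^esub> \<otimes>\<^bsub>free_group Y\<^esub> x = x"
    by (simp add: mult_free_group)
  define y where "y = fg_reduce (rev (map inv_letter x))"
  have "y \<in> carrier (free_group Y)"
    using x set_fg_push_all[of "rev (map inv_letter x)" "[]"]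
    by (force simp: y_def carrier_free_group fg_reduce_eq_fg_push_all reduced_fg_push_all inv_letter_def)
  moreover have "y \<otimes>\<^bsub>free_group Y\<^esub> x = \<one>\<^bsub>free_group Y\<^esub>"
    using x by (simp add: y_def mult_free_group carrier_free_group fg_push_all_fg_reduce
        fg_push_all_inverse)
  ultimately show "\<exists>y\<in>carrier (free_group Y). y \<otimes>\<^bsub>free_group Y\<^esub> x = \<one>\<^bsub>free_group Y\<^esub>" ..
qed

definition word_eval :: "('c, 'd) monoid_scheme \<Rightarrow> ('x \<Rightarrow> 'c) \<Rightarrow> ('x \<times> bool) list \<Rightarrow> 'c" where
  "word_eval H s w =
     foldr (\<lambda>l acc. (if snd l then s (fst l) else inv\<^bsub>H\<^esub> (s (fst l))) \<otimes>\<^bsub>H\<^esub> acc) w \<one>\<^bsub>H\<^esub>"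

lemma word_eval_simps [simp]:
  "word_eval H s [] = \<one>\<^bsub>H\<^esub>"
  "word_eval H s (l # w) = (if snd l then s (fst l) else inv\<^bsub>H\<^esub> (s (fst l))) \<otimes>\<^bsub>H\<^esub> word_eval H s w"
  by (simp_all add: word_eval_def)

lemma fg_eval_eq_word_eval: "fg_eval G w = word_eval G id w"
  by (simp add: fg_eval_def word_eval_def id_def)

context group
begin

lemma word_eval_closed: "s ` Y \<subseteq> carrier G \<Longrightarrow> fst ` set w \<subseteq> Y \<Longrightarrow> word_eval G s w \<in> carrier G"
  by (induction w) auto

lemma word_eval_fg_push:
  assumes "s ` Y \<subseteq> carrier G" "fst ` set (l # w) \<subseteq> Y"
  shows "word_eval G s (fg_push l w) = word_eval G s (l # w)"
proof (cases w)
  case (Cons y ys)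
  then have "s (fst y) \<in> carrier G" "word_eval G s ys \<in> carrier G"
    using assms word_eval_closed by auto
  with Cons show ?thesis
    by (cases "snd y") (auto simp: m_assoc[symmetric])
qed simp

lemma word_eval_fg_push_all:
  assumes s: "s ` Y \<subseteq> carrier G" and "fst ` set u \<subseteq> Y" "fst ` set v \<subseteq> Y"
  shows "word_eval G s (fg_push_all u v) = word_eval G s u \<otimes> word_eval G s v"
  using assms(2)
proof (induction u)
  case (Cons l u)
  have "fst ` set (fg_push_all u v) \<subseteq> Y"
    using Cons.prems assms(3) set_fg_push_all[of u v] by fastforce
  then have "word_eval G s (fg_push_all (l # u) v) = word_eval G s (l # fg_push_all u v)"
    using Cons.prems by (simp add: word_eval_fg_push[OF s])
  moreover have "s (fst l) \<in> carrier G"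
    using Cons.prems s by auto
  ultimately show ?case
    using Cons word_eval_closed[OF s] assms(3) by (simp add: m_assoc)
qed (use word_eval_closed[OF s assms(3)] in simp)

lemma word_eval_hom: "s ` Y \<subseteq> carrier G \<Longrightarrow> word_eval G s \<in> hom (free_group Y) G"
  by (rule homI) (simp_all add: word_eval_closed word_eval_fg_push_all carrier_free_group mult_free_group)

end

section \<open>Hopf's formula and central extensions\<close>

context group
begin

lemma commutator_eq:
  assumes "a \<in> carrier G" "b \<in> carrier G" "c \<in> carrier G" "a \<otimes> b = c \<otimes> (b \<otimes> a)"
  shows "a \<otimes> b \<otimes> inv a \<otimes> inv b = c"
  using assms by (simp add: m_assoc[symmetric]) (simp add: m_assoc)

lemma group_pres_F: "group (pres_F G)"
  by (simp add: pres_F_def group_free_group)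

lemma pres_R_eq_kernel: "pres_R G = kernel (pres_F G) G (word_eval G id)"
  by (simp add: pres_R_def kernel_def fg_eval_eq_word_eval)

lemma group_hom_word_eval_pres_F: "group_hom (pres_F G) G (word_eval G id)"
  using word_eval_hom[of id "carrier G"]
  by (simp add: group_hom_def group_hom_axioms_def group_free_group pres_F_def)

lemma subgroup_pres_R: "subgroup (pres_R G) (pres_F G)"
  unfolding pres_R_eq_kernel by (rule group_hom.subgroup_kernel[OF group_hom_word_eval_pres_F])

lemma subgroup_pres_R_Int_derived:
  "subgroup (pres_R G \<inter> derived (pres_F G) (carrier (pres_F G))) (pres_F G)"
  using group.subgroups_Inter_pair[OF group_pres_F subgroup_pres_R
      group.derived_is_subgroup[OF group_pres_F]] by simp

text \<open>If \<phi> maps R into the centre, it kills [R, F], so the cosets of [R, F] in R \<inter> F',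
  i.e. the elements of M(G), map onto the image of R \<inter> F'.\<close>

lemma card_central_image_le_schur_multiplier_order:
  assumes "group E" and phi: "\<phi> \<in> hom (pres_F G) E"
    and central: "\<And>r h. r \<in> pres_R G \<Longrightarrow> h \<in> carrier (pres_F G) \<Longrightarrow> \<phi> r \<otimes>\<^bsub>E\<^esub> \<phi> h = \<phi> h \<otimes>\<^bsub>E\<^esub> \<phi> r"
    and fin: "finite (schur_multiplier_carrier G)"
  shows "finite (\<phi> ` (pres_R G \<inter> derived (pres_F G) (carrier (pres_F G))))"
    and "card (\<phi> ` (pres_R G \<inter> derived (pres_F G) (carrier (pres_F G)))) \<le> schur_multiplier_order G"
proof -
  let ?F = "pres_F G" and ?R = "pres_R G" and ?S = "pres_R G \<inter> derived (pres_F G) (carrier (pres_F G))"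
  let ?K = "mixed_commutator ?F ?R (carrier ?F)"
  interpret F: group ?F by (rule group_pres_F)
  interpret \<phi>: group_hom ?F E \<phi>
    using assms(1) phi F.is_group by (simp add: group_hom_def group_hom_axioms_def)
  have R: "?R \<subseteq> carrier ?F"
    using subgroup.subset[OF subgroup_pres_R] .
  have K: "subgroup ?K ?F"
    unfolding mixed_commutator_def using R by (intro F.generate_is_subgroup) auto
  have "?K \<subseteq> kernel ?F E \<phi>"
    unfolding mixed_commutator_def
  proof (rule F.generate_subgroup_incl[OF _ \<phi>.subgroup_kernel], safe)
    fix r h assume rh: "r \<in> ?R" "h \<in> carrier ?F"
    with R have "r \<in> carrier ?F" by auto
    moreover have "\<phi> r \<otimes>\<^bsub>E\<^esub> \<phi> h \<otimes>\<^bsub>E\<^esub> inv\<^bsub>E\<^esub> \<phi> r \<otimes>\<^bsub>E\<^esub> inv\<^bsub>E\<^esub> \<phi> h = \<one>\<^bsub>E\<^esub>"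
      using calculation rh central by (intro \<phi>.H.commutator_eq) auto
    ultimately show "r \<otimes>\<^bsub>?F\<^esub> h \<otimes>\<^bsub>?F\<^esub> inv\<^bsub>?F\<^esub> r \<otimes>\<^bsub>?F\<^esub> inv\<^bsub>?F\<^esub> h \<in> kernel ?F E \<phi>"
      using rh by (simp add: kernel_def)
  qed
  then have coset_value: "\<phi> (SOME y. y \<in> ?K #>\<^bsub>?F\<^esub> x) = \<phi> x" if "x \<in> carrier ?F" for x
    using someI[of "\<lambda>y. y \<in> ?K #>\<^bsub>?F\<^esub> x", OF F.rcos_self[OF that K]] that K
    by (auto simp: r_coset_def kernel_def dest: subgroup.mem_carrier)
  have "\<phi> ` ?S = (\<lambda>C. \<phi> (SOME y. y \<in> C)) ` ((\<lambda>x. ?K #>\<^bsub>?F\<^esub> x) ` ?S)"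
    using R by (force simp: image_image coset_value intro: image_cong)
  also have "\<dots> = (\<lambda>C. \<phi> (SOME y. y \<in> C)) ` schur_multiplier_carrier G"
    by (simp add: schur_multiplier_carrier_def Let_def)
  finally have "\<phi> ` ?S = (\<lambda>C. \<phi> (SOME y. y \<in> C)) ` schur_multiplier_carrier G" .
  with fin show "finite (\<phi> ` ?S)" "card (\<phi> ` ?S) \<le> schur_multiplier_order G"
    by (simp_all add: schur_multiplier_order_def card_image_le)
qed

end

section \<open>Characters modulo p and the bilinear extension\<close>

lemma mod_add_mult_mod_left:
  fixes a b c e n :: "'a :: euclidean_semiring_cancel"
  shows "(a mod n + b + c mod n * e) mod n = (a + b + c * e) mod n"
  by (rule mod_add_cong) (simp_all add: mod_add_left_eq mod_mult_left_eq)

lemma mod_add_mult_mod_right: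
  fixes a b c e n :: "'a :: euclidean_semiring_cancel"
  shows "(a + b mod n + c * (e mod n)) mod n = (a + b + c * e) mod n"
  by (rule mod_add_cong) (simp_all add: mod_add_right_eq mod_mult_right_eq)

definition index_pairs :: "nat \<Rightarrow> (nat \<times> nat) set" where
  "index_pairs d = {(i, j). i < j \<and> j < d}"

lemma index_pairsD: "ij \<in> index_pairs d \<Longrightarrow> fst ij < d \<and> snd ij < d \<and> fst ij < snd ij"
  by (auto simp: index_pairs_def)

lemma finite_index_pairs [simp]: "finite (index_pairs d)"
  by (rule finite_subset[of _ "{..<d} \<times> {..<d}"]) (auto simp: index_pairs_def)

lemma card_index_pairs: "2 * card (index_pairs d) = d * (d - 1)"
proof (induction d)
  case (Suc d)
  have "index_pairs (Suc d) = index_pairs d \<union> (\<lambda>i. (i, d)) ` {..<d}"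
    by (auto simp: index_pairs_def)
  moreover have "index_pairs d \<inter> (\<lambda>i. (i, d)) ` {..<d} = {}"
    by (auto simp: index_pairs_def)
  ultimately have "card (index_pairs (Suc d)) = card (index_pairs d) + d"
    by (simp add: card_Un_disjoint card_image inj_on_def)
  with Suc show ?case
    by (cases d) (auto simp: algebra_simps)
qed (simp add: index_pairs_def)

lemma (in group) hom_integer_mod_group_sum:
  assumes "0 < p" and h: "\<And>j. j \<in> J \<Longrightarrow> h j \<in> hom G (integer_mod_group p)"
  shows "(\<lambda>y. (\<Sum>j\<in>J. c j * h j y) mod int p) \<in> hom G (integer_mod_group p)"
proof (rule homI)
  fix y assume "y \<in> carrier G"
  then show "(\<Sum>j\<in>J. c j * h j y) mod int p \<in> carrier (integer_mod_group p)"
    using assms(1) by (simp add: carrier_integer_mod_group)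
next
  fix y z assume yz: "y \<in> carrier G" "z \<in> carrier G"
  have "h j (y \<otimes> z) = (h j y + h j z) mod int p" if "j \<in> J" for j
    using hom_mult[OF h[OF that] yz] by simp
  then have "(\<Sum>j\<in>J. c j * h j (y \<otimes> z)) mod int p
      = (\<Sum>j\<in>J. c j * ((h j y + h j z) mod int p)) mod int p"
    by (simp cong: sum.cong)
  also have "\<dots> = (\<Sum>j\<in>J. c j * (h j y + h j z)) mod int p"
    by (subst mod_sum_eq[symmetric]) (simp add: mod_mult_right_eq mod_sum_eq)
  also have "\<dots> = ((\<Sum>j\<in>J. c j * h j y) mod int p + (\<Sum>j\<in>J. c j * h j z) mod int p) mod int p"
    by (simp add: distrib_left sum.distrib mod_add_eq)
  finally show "(\<Sum>j\<in>J. c j * h j (y \<otimes> z)) mod int p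
      = ((\<Sum>j\<in>J. c j * h j y) mod int p) \<otimes>\<^bsub>integer_mod_group p\<^esub> ((\<Sum>j\<in>J. c j * h j z) mod int p)"
    by simp
qed

text \<open>The extension G \<times> (\<int>/p)^(d choose 2), with the fibre encoded as functions on the pairs
  i < j with values in {0..<p}, twisted by the bilinear cocycle (a, b) \<mapsto> (f i a * f j b)_{i<j}.\<close>

definition bilinear_ext :: "('a, 'b) monoid_scheme \<Rightarrow> nat \<Rightarrow> nat \<Rightarrow> (nat \<Rightarrow> 'a \<Rightarrow> int)
    \<Rightarrow> ('a \<times> (nat \<times> nat \<Rightarrow> int)) monoid" where
  "bilinear_ext G p d f =
    \<lparr>carrier = carrier G \<times> (index_pairs d \<rightarrow>\<^sub>E {0..<int p}),
     monoid.mult = (\<lambda>a b. (fst a \<otimes>\<^bsub>G\<^esub> fst b,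
       restrict (\<lambda>ij. (snd a ij + snd b ij + f (fst ij) (fst a) * f (snd ij) (fst b)) mod int p)
         (index_pairs d))),
     one = (\<one>\<^bsub>G\<^esub>, restrict (\<lambda>_. 0) (index_pairs d))\<rparr>"

locale mod_characters = group G for G (structure) +
  fixes p d :: nat and f :: "nat \<Rightarrow> 'a \<Rightarrow> int"
  assumes modulus_gt_1: "1 < p"
    and character_hom: "i < d \<Longrightarrow> f i \<in> hom G (integer_mod_group p)"
begin

abbreviation "E \<equiv> bilinear_ext G p d f"

lemma p_pos: "0 < p"
  using modulus_gt_1 by simp

lemma character_range: "i < d \<Longrightarrow> x \<in> carrier G \<Longrightarrow> f i x \<in> {0..<int p}"
  using hom_in_carrier[OF character_hom] p_pos by (simp add: carrier_integer_mod_group)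

lemma character_mult:
  "i < d \<Longrightarrow> x \<in> carrier G \<Longrightarrow> y \<in> carrier G \<Longrightarrow> f i (x \<otimes> y) = (f i x + f i y) mod int p"
  using character_hom by (simp add: hom_def)

lemma character_one: "i < d \<Longrightarrow> f i \<one> = 0"
  using group_hom.hom_one[of G "integer_mod_group p" "f i"] character_hom
  by (simp add: group_hom_def group_hom_axioms_def)

lemma character_inv: "i < d \<Longrightarrow> x \<in> carrier G \<Longrightarrow> f i (inv x) = (- f i x) mod int p"
  using group_hom.hom_inv[of G "integer_mod_group p" "f i" x] character_hom character_range
  by (simp add: group_hom_def group_hom_axioms_def carrier_integer_mod_group)

lemma carrier_E: "carrier E = carrier G \<times> (index_pairs d \<rightarrow>\<^sub>E {0..<int p})"
  by (simp add: bilinear_ext_def)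

lemma mult_E: "a \<otimes>\<^bsub>E\<^esub> b = (fst a \<otimes> fst b,
    restrict (\<lambda>ij. (snd a ij + snd b ij + f (fst ij) (fst a) * f (snd ij) (fst b)) mod int p)
      (index_pairs d))"
  by (simp add: bilinear_ext_def)

lemma one_E: "\<one>\<^bsub>E\<^esub> = (\<one>, restrict (\<lambda>_. 0) (index_pairs d))"
  by (simp add: bilinear_ext_def)

lemma group_E: "group E"
proof (rule groupI)
  fix x y assume "x \<in> carrier E" "y \<in> carrier E"
  then show "x \<otimes>\<^bsub>E\<^esub> y \<in> carrier E"
    using p_pos by (auto simp: carrier_E mult_E)
next
  show "\<one>\<^bsub>E\<^esub> \<in> carrier E"
    using p_pos by (auto simp: carrier_E one_E)
next
  fix x y z assume "x \<in> carrier E" "y \<in> carrier E" "z \<in> carrier E"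
  then have xyz: "fst x \<in> carrier G" "fst y \<in> carrier G" "fst z \<in> carrier G"
    by (auto simp: carrier_E)
  show "x \<otimes>\<^bsub>E\<^esub> y \<otimes>\<^bsub>E\<^esub> z = x \<otimes>\<^bsub>E\<^esub> (y \<otimes>\<^bsub>E\<^esub> z)"
    using xyz index_pairsD
    by (auto simp: mult_E m_assoc character_mult mod_add_mult_mod_left mod_add_mult_mod_right
        intro!: restrict_ext) (simp add: algebra_simps)
next
  fix x assume "x \<in> carrier E"
  then obtain a v where x: "x = (a, v)" "a \<in> carrier G" "v \<in> index_pairs d \<rightarrow>\<^sub>E {0..<int p}"
    by (auto simp: carrier_E)
  then show "\<one>\<^bsub>E\<^esub> \<otimes>\<^bsub>E\<^esub> x = x"
    using index_pairsD character_one
    by (auto simp: mult_E one_E PiE_iff extensional_def fun_eq_iff)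
  define y where "y = (inv a, restrict (\<lambda>ij. (- v ij + f (fst ij) a * f (snd ij) a) mod int p) (index_pairs d))"
  have "y \<in> carrier E"
    using x p_pos by (auto simp: y_def carrier_E)
  moreover have "y \<otimes>\<^bsub>E\<^esub> x = \<one>\<^bsub>E\<^esub>"
    using x index_pairsD
    by (auto simp: y_def mult_E one_E character_inv mod_add_mult_mod_left intro!: restrict_ext)
  ultimately show "\<exists>y\<in>carrier E. y \<otimes>\<^bsub>E\<^esub> x = \<one>\<^bsub>E\<^esub>" ..
qed

definition basis_elt :: "nat \<times> nat \<Rightarrow> 'a \<times> (nat \<times> nat \<Rightarrow> int)" where
  "basis_elt ij = (\<one>, restrict (\<lambda>kl. if kl = ij then 1 else 0) (index_pairs d))"

lemma basis_elt_carrier: "basis_elt ij \<in> carrier E"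
  using modulus_gt_1 by (auto simp: basis_elt_def carrier_E)

lemma fibre_subset_subgroup:
  assumes H: "subgroup H E" and basis: "\<And>ij. ij \<in> index_pairs d \<Longrightarrow> basis_elt ij \<in> H"
    and v: "v \<in> index_pairs d \<rightarrow>\<^sub>E {0..<int p}"
  shows "(\<one>, v) \<in> H"
  using v
proof (induction "nat (sum v (index_pairs d))" arbitrary: v rule: less_induct)
  case less
  show ?case
  proof (cases "\<exists>ij\<in>index_pairs d. 0 < v ij")
    case False
    with less.prems have "v = restrict (\<lambda>_. 0) (index_pairs d)"
      by (force simp: PiE_iff extensional_def)
    then show ?thesis
      using subgroup.one_closed[OF H] by (simp add: one_E)
  next
    case True
    then obtain ij where ij: "ij \<in> index_pairs d" "0 < v ij" by blast
    define w where "w = v(ij := v ij - 1)"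
    have w: "w \<in> index_pairs d \<rightarrow>\<^sub>E {0..<int p}"
      using less.prems ij by (auto simp: w_def PiE_iff extensional_def)
    have "sum v (index_pairs d) = sum w (index_pairs d) + 1"
      using ij by (simp add: w_def sum.remove)
    moreover have "0 \<le> sum w (index_pairs d)"
      using w by (auto simp: PiE_iff intro: sum_nonneg)
    ultimately have "(\<one>, w) \<in> H"
      using less.hyps w by simp
    moreover have "(\<one>, w) \<otimes>\<^bsub>E\<^esub> basis_elt ij = (\<one>, v)"
      using less.prems ij character_one index_pairsD
      by (auto simp: mult_E basis_elt_def w_def PiE_iff extensional_def fun_eq_iff)
    ultimately show ?thesis
      using subgroup.m_closed[OF H] basis[OF ij(1)] by metis
  qed
qed

lemma card_le_power_mult_card_common_kernel:
  assumes fin: "finite (carrier G)"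
  shows "card (carrier G) \<le> p ^ d * card {x \<in> carrier G. \<forall>i<d. f i x = 0}"
proof -
  let ?N = "{x \<in> carrier G. \<forall>i<d. f i x = 0}"
  define V where "V x = restrict (\<lambda>i. f i x) {..<d}" for x
  define rep where "rep v = (SOME x. x \<in> carrier G \<and> V x = v)" for v
  have rep: "rep (V x) \<in> carrier G" "V (rep (V x)) = V x" if "x \<in> carrier G" for x
    using someI[of "\<lambda>y. y \<in> carrier G \<and> V y = V x" x] that by (auto simp: rep_def)
  define h where "h x = (V x, x \<otimes> inv (rep (V x)))" for x
  have "inj_on h (carrier G)"
  proof (rule inj_onI)
    fix x y assume "x \<in> carrier G" "y \<in> carrier G" "h x = h y"
    then show "x = y"
      using rep(1)[of x] by (auto simp: h_def)
  qed
  moreover have "h ` carrier G \<subseteq> V ` carrier G \<times> ?N"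
  proof (rule image_subsetI)
    fix x assume x: "x \<in> carrier G"
    have "f i (x \<otimes> inv (rep (V x))) = 0" if i: "i < d" for i
    proof -
      have "f i (rep (V x)) = f i x"
        using fun_cong[OF rep(2)[OF x], of i] i by (simp add: V_def)
      then show ?thesis
        using i x rep(1)[OF x] by (simp add: character_mult character_inv mod_add_right_eq)
    qed
    then show "h x \<in> V ` carrier G \<times> ?N"
      using x rep[OF x] by (simp add: h_def)
  qed
  ultimately have "card (carrier G) \<le> card (V ` carrier G) * card ?N"
    using card_inj_on_le[of h "carrier G" "V ` carrier G \<times> ?N"] fin
    by (simp add: card_cartesian_product)
  moreover have "card (V ` carrier G) \<le> p ^ d"
  proof -
    have "V ` carrier G \<subseteq> {..<d} \<rightarrow>\<^sub>E {0..<int p}"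
      using character_range by (auto simp: V_def)
    then show ?thesis
      using card_mono[OF finite_PiE[of "{..<d}" "\<lambda>_. {0..<int p}"]] by (simp add: card_PiE)
  qed
  ultimately show ?thesis
    by (meson le_trans mult_le_mono1)
qed

end

locale dual_basis = mod_characters + comm_group G +
  fixes g :: "nat \<Rightarrow> 'a"
  assumes dual_carrier: "j < d \<Longrightarrow> g j \<in> carrier G"
    and character_dual: "i < d \<Longrightarrow> j < d \<Longrightarrow> f i (g j) = (if i = j then 1 else 0)"
begin

definition lift :: "'a \<Rightarrow> 'a \<times> (nat \<times> nat \<Rightarrow> int)" where
  "lift x = (x, restrict (\<lambda>_. 0) (index_pairs d))"

lemma lift_carrier: "x \<in> carrier G \<Longrightarrow> lift x \<in> carrier E"
  using p_pos by (auto simp: lift_def carrier_E)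

lemma fst_inv_E:
  assumes "a \<in> carrier E"
  shows "fst (inv\<^bsub>E\<^esub> a) = inv (fst a)"
proof -
  interpret E: group E by (rule group_E)
  have "fst (inv\<^bsub>E\<^esub> a) \<otimes> fst a = \<one>"
    using E.l_inv[OF assms] by (simp add: mult_E one_E)
  moreover have "fst (inv\<^bsub>E\<^esub> a) \<in> carrier G" "fst a \<in> carrier G"
    using E.inv_closed[OF assms] assms by (auto simp: carrier_E)
  ultimately show ?thesis
    by (intro inv_equality[symmetric])
qed

lemma fst_word_eval_lift: "fst ` set w \<subseteq> carrier G \<Longrightarrow> fst (word_eval E lift w) = word_eval G id w"
  by (induction w) (auto simp: one_E mult_E fst_inv_E lift_carrier, simp_all add: lift_def)

lemma word_eval_lift_hom: "word_eval E lift \<in> hom (pres_F G) E"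
  using group.word_eval_hom[OF group_E, of lift "carrier G"] lift_carrier by (auto simp: pres_F_def)

lemma group_hom_word_eval_lift: "group_hom (pres_F G) E (word_eval E lift)"
  using word_eval_lift_hom group_E group_pres_F by (simp add: group_hom_def group_hom_axioms_def)

lemma central_E:
  assumes "c \<in> carrier E" "fst c = \<one>" "b \<in> carrier E"
  shows "c \<otimes>\<^bsub>E\<^esub> b = b \<otimes>\<^bsub>E\<^esub> c"
  using assms index_pairsD character_one
  by (auto simp: mult_E carrier_E add.commute intro!: restrict_ext)

lemma lift_dual_mult:
  assumes "ij \<in> index_pairs d"
  shows "lift (g (fst ij)) \<otimes>\<^bsub>E\<^esub> lift (g (snd ij))
       = basis_elt ij \<otimes>\<^bsub>E\<^esub> (lift (g (snd ij)) \<otimes>\<^bsub>E\<^esub> lift (g (fst ij)))"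
  using assms modulus_gt_1 dual_carrier index_pairsD character_dual character_one
  by (auto simp: mult_E lift_def basis_elt_def m_comm index_pairs_def intro!: restrict_ext)

definition dual_letter :: "nat \<Rightarrow> ('a \<times> bool) list" where
  "dual_letter i = [(g i, True)]"

definition commutator_word :: "nat \<times> nat \<Rightarrow> ('a \<times> bool) list" where
  "commutator_word ij =
     dual_letter (fst ij) \<otimes>\<^bsub>pres_F G\<^esub> dual_letter (snd ij)
       \<otimes>\<^bsub>pres_F G\<^esub> inv\<^bsub>pres_F G\<^esub> dual_letter (fst ij) \<otimes>\<^bsub>pres_F G\<^esub> inv\<^bsub>pres_F G\<^esub> dual_letter (snd ij)"

lemma commutator_word:
  assumes ij: "ij \<in> index_pairs d"
  shows "commutator_word ij \<in> pres_R G \<inter> derived (pres_F G) (carrier (pres_F G))"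
    and "word_eval E lift (commutator_word ij) = basis_elt ij"
proof -
  interpret FE: group_hom "pres_F G" E "word_eval E lift" by (rule group_hom_word_eval_lift)
  interpret FG: group_hom "pres_F G" G "word_eval G id" by (rule group_hom_word_eval_pres_F)
  obtain i j where ij': "ij = (i, j)" "i < d" "j < d"
    using ij index_pairsD by (cases ij) auto
  let ?F = "pres_F G"
  have cw: "commutator_word ij = dual_letter i \<otimes>\<^bsub>?F\<^esub> dual_letter j
      \<otimes>\<^bsub>?F\<^esub> inv\<^bsub>?F\<^esub> dual_letter i \<otimes>\<^bsub>?F\<^esub> inv\<^bsub>?F\<^esub> dual_letter j"
    by (simp add: commutator_word_def ij')
  have letters: "dual_letter i \<in> carrier ?F" "dual_letter j \<in> carrier ?F"
    using ij' dual_carrier by (simp_all add: dual_letter_def pres_F_def carrier_free_group)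
  have "commutator_word ij \<in> derived ?F (carrier ?F)"
    unfolding derived_def cw by (rule generate.incl) (use letters in blast)
  moreover have "word_eval G id (commutator_word ij) = g i \<otimes> g j \<otimes> inv g i \<otimes> inv g j"
    using letters by (simp add: cw) (simp add: dual_letter_def dual_carrier ij')
  moreover have "g i \<otimes> g j \<otimes> inv g i \<otimes> inv g j = \<one>"
    using ij' dual_carrier by (intro commutator_eq) (simp_all add: m_comm)
  ultimately show "commutator_word ij \<in> pres_R G \<inter> derived (pres_F G) (carrier (pres_F G))"
    using letters by (simp add: pres_R_eq_kernel kernel_def cw)
  have "word_eval E lift (commutator_word ij)
      = lift (g i) \<otimes>\<^bsub>E\<^esub> lift (g j) \<otimes>\<^bsub>E\<^esub> inv\<^bsub>E\<^esub> lift (g i) \<otimes>\<^bsub>E\<^esub> inv\<^bsub>E\<^esub> lift (g j)"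
    using letters by (simp add: cw) (simp add: dual_letter_def lift_carrier dual_carrier ij')
  also have "\<dots> = basis_elt ij"
    using ij' dual_carrier lift_dual_mult[OF ij]
    by (intro FE.H.commutator_eq) (simp_all add: lift_carrier basis_elt_carrier)
  finally show "word_eval E lift (commutator_word ij) = basis_elt ij" .
qed

lemma fibre_subset_image_lift:
  "{\<one>} \<times> (index_pairs d \<rightarrow>\<^sub>E {0..<int p})
     \<subseteq> word_eval E lift ` (pres_R G \<inter> derived (pres_F G) (carrier (pres_F G)))"
proof -
  have "subgroup (word_eval E lift ` (pres_R G \<inter> derived (pres_F G) (carrier (pres_F G)))) E"
    by (rule group_hom.subgroup_img_is_subgroup[OF group_hom_word_eval_lift subgroup_pres_R_Int_derived])
  moreover have "basis_elt ij \<in> word_eval E lift ` (pres_R G \<inter> derived (pres_F G) (carrier (pres_F G)))"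
    if "ij \<in> index_pairs d" for ij
    using commutator_word[OF that] by (metis image_eqI)
  ultimately show ?thesis
    using fibre_subset_subgroup by blast
qed

theorem schur_multiplier_order_ge:
  assumes "finite (schur_multiplier_carrier G)"
  shows "p ^ card (index_pairs d) \<le> schur_multiplier_order G"
proof -
  let ?I = "word_eval E lift ` (pres_R G \<inter> derived (pres_F G) (carrier (pres_F G)))"
  have central: "word_eval E lift r \<otimes>\<^bsub>E\<^esub> word_eval E lift h = word_eval E lift h \<otimes>\<^bsub>E\<^esub> word_eval E lift r"
    if "r \<in> pres_R G" "h \<in> carrier (pres_F G)" for r h
    using that word_eval_lift_hom subgroup.mem_carrier[OF subgroup_pres_R]
    by (intro central_E) (auto simp: pres_R_eq_kernel kernel_def pres_F_def carrier_free_group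
        fst_word_eval_lift hom_in_carrier)
  note image = card_central_image_le_schur_multiplier_order[OF group_E word_eval_lift_hom central assms]
  have "p ^ card (index_pairs d) = card ({\<one>} \<times> (index_pairs d \<rightarrow>\<^sub>E {0..<int p}))"
    by (simp add: card_cartesian_product card_PiE)
  also have "\<dots> \<le> card ?I"
    using image(1) by (intro card_mono fibre_subset_image_lift)
  also have "\<dots> \<le> schur_multiplier_order G"
    using image(2) .
  finally show ?thesis .
qed

lemma length_le_card:
  assumes "finite (carrier G)"
  shows "d \<le> card (carrier G)"
proof -
  have "inj_on g {..<d}"
    using character_dual by (intro inj_onI) (metis lessThan_iff zero_neq_one)
  then show ?thesis
    using card_inj_on_le[of g "{..<d}" "carrier G"] dual_carrier assms by auto
qed

text \<open>Subtracting the sum of \<chi>(g j) f j from \<chi> makes it vanish on the g j without changing its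
  value 1 at x, on which all f j vanish.\<close>

lemma dual_basis_extend:
  assumes \<chi>: "\<chi> \<in> hom G (integer_mod_group p)"
    and x: "x \<in> carrier G" "\<chi> x = 1" "\<And>i. i < d \<Longrightarrow> f i x = 0"
  shows "\<exists>f' g'. dual_basis G p (Suc d) f' g'"
proof -
  define c where "c j = (if j = d then 1 else - \<chi> (g j))" for j
  define \<chi>' where "\<chi>' y = (\<Sum>j<Suc d. c j * (f(d := \<chi>)) j y) mod int p" for y
  have hom: "\<chi>' \<in> hom G (integer_mod_group p)"
    unfolding \<chi>'_def using p_pos \<chi> character_hom
    by (intro hom_integer_mod_group_sum) (auto simp: less_Suc_eq)
  have \<chi>'_eq: "\<chi>' y = (\<chi> y - (\<Sum>j<d. \<chi> (g j) * f j y)) mod int p" for y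
    by (simp add: \<chi>'_def c_def sum_negf)
  have "\<chi>' (g k) = 0" if "k < d" for k
  proof -
    have "(\<Sum>j<d. \<chi> (g j) * f j (g k)) = \<chi> (g k)"
      using that by (simp add: character_dual if_distrib cong: if_cong)
    then show ?thesis
      by (simp add: \<chi>'_eq)
  qed
  moreover have "\<chi>' x = 1"
    using x modulus_gt_1 by (simp add: \<chi>'_eq)
  ultimately have "dual_basis G p (Suc d) (f(d := \<chi>')) (g(d := x))"
    using hom character_hom dual_carrier character_dual x modulus_gt_1
    by unfold_locales (auto simp: less_Suc_eq)
  then show ?thesis
    by blast
qed

end

section \<open>Maximal subgroups of finite abelian p-groups\<close>

context comm_group
begin

definition mult_powers :: "'a set \<Rightarrow> 'a \<Rightarrow> 'a set" where
  "mult_powers M y = {m \<otimes> y [^] (k::int) | m k. m \<in> M}"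

lemma subgroup_mult_powers:
  assumes M: "subgroup M G" and y: "y \<in> carrier G"
  shows "subgroup (mult_powers M y) G"
proof (rule subgroupI)
  show "mult_powers M y \<subseteq> carrier G"
    using subgroup.subset[OF M] y by (auto simp: mult_powers_def)
  show "mult_powers M y \<noteq> {}"
    using subgroup.one_closed[OF M] by (auto simp: mult_powers_def)
next
  fix a assume "a \<in> mult_powers M y"
  then obtain m and k :: int where a: "a = m \<otimes> y [^] k" "m \<in> M" by (auto simp: mult_powers_def)
  then have "inv a = inv m \<otimes> y [^] (- k)"
    using subgroup.mem_carrier[OF M] y by (simp add: inv_mult int_pow_neg m_comm)
  then show "inv a \<in> mult_powers M y"
    using subgroup.m_inv_closed[OF M a(2)] by (auto simp: mult_powers_def)
next
  fix a b assume "a \<in> mult_powers M y" "b \<in> mult_powers M y"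
  then obtain m m' and k k' :: int where ab: "a = m \<otimes> y [^] k" "m \<in> M" "b = m' \<otimes> y [^] k'" "m' \<in> M"
    by (auto simp: mult_powers_def)
  then have "a \<otimes> b = (m \<otimes> m') \<otimes> y [^] (k + k')"
    using subgroup.mem_carrier[OF M] y by (simp add: int_pow_mult m_ac)
  then show "a \<otimes> b \<in> mult_powers M y"
    using subgroup.m_closed[OF M ab(2,4)] by (auto simp: mult_powers_def)
qed

lemma maximal_subgroup_mult_powers:
  assumes max: "maximal_subgroup M G" and y: "y \<in> carrier G" "y \<notin> M"
  shows "mult_powers M y = carrier G"
proof -
  have M: "subgroup M G"
    using max by (simp add: maximal_subgroup_def)
  have "M \<subseteq> mult_powers M y"
    using subgroup.mem_carrier[OF M] by (force simp: mult_powers_def intro: exI[of _ 0])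
  moreover have "y \<in> mult_powers M y"
    using y subgroup.one_closed[OF M] by (force simp: mult_powers_def intro: exI[of _ 1])
  ultimately show ?thesis
    using max y subgroup_mult_powers[OF M y(1)] by (auto simp: maximal_subgroup_def)
qed

text \<open>If p does not divide k, Bezout with p^n = |G| recovers x from x^k; and x^p \<in> M, since
  otherwise M and x^p would generate G and x would be a p-th power modulo M.\<close>

lemma int_pow_in_maximal_subgroup_iff:
  assumes p: "Factorial_Ring.prime p" and ord: "order G = p ^ n"
    and max: "maximal_subgroup M G" and x: "x \<in> carrier G" "x \<notin> M"
  shows "x [^] k \<in> M \<longleftrightarrow> int p dvd k"
proof -
  have M: "subgroup M G"
    using max by (simp add: maximal_subgroup_def)
  have dvd_if_mem: "int p dvd j" if "x [^] j \<in> M" for j :: int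
  proof (rule ccontr)
    assume "\<not> int p dvd j"
    then have "coprime j (int p ^ n)"
      using p prime_imp_coprime[of "int p" j] by (simp add: coprime_commute)
    then obtain u v where uv: "u * j + v * int p ^ n = 1"
      using bezout_int[of j "int p ^ n"] by auto
    have "x [^] (int p ^ n) = \<one>"
      using pow_order_eq_1[OF x(1)] ord by (simp add: int_pow_int flip: of_nat_power)
    then have "x [^] (v * int p ^ n) = \<one>"
      using int_pow_pow[OF x(1), of "int p ^ n" v] by (simp add: mult.commute)
    then have "x [^] (u * j + v * int p ^ n) = (x [^] j) [^] u"
      using x by (simp add: int_pow_mult int_pow_pow mult.commute)
    then have "x = (x [^] j) [^] u"
      using x by (simp add: uv)
    with that x(2) show False
      using subgroup_int_pow_closed[OF M] by metis
  qed
  have "x [^] int p \<in> M"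
  proof (rule ccontr)
    assume "x [^] int p \<notin> M"
    then have "x \<in> mult_powers M (x [^] int p)"
      using maximal_subgroup_mult_powers[OF max] x by simp
    then obtain m and s :: int where m: "m \<in> M" "x = m \<otimes> x [^] (int p * s)"
      using x by (auto simp: mult_powers_def int_pow_pow)
    then have "x [^] (1 - int p * s) = m"
      using x subgroup.mem_carrier[OF M] by (simp add: int_pow_diff inv_solve_right')
    then have "x [^] (1 - int p * s) \<in> M"
      using m by simp
    then have "int p dvd 1 - int p * s"
      by (rule dvd_if_mem)
    then have "int p dvd 1"
      by (metis dvd_add dvd_triv_left diff_add_cancel)
    with p show False
      by simp
  qed
  then have "x [^] (int p * s) \<in> M" for s
    using subgroup_int_pow_closed[OF M] x(1) by (metis int_pow_pow)
  then show ?thesis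
    using dvd_if_mem by (auto simp: dvd_def)
qed

lemma maximal_subgroup_character:
  assumes p: "Factorial_Ring.prime p" and ord: "order G = p ^ n"
    and max: "maximal_subgroup M G" and x: "x \<in> carrier G" "x \<notin> M"
  shows "\<exists>\<chi> \<in> hom G (integer_mod_group p). \<chi> x = 1"
proof -
  have M: "subgroup M G"
    using max by (simp add: maximal_subgroup_def)
  have p1: "1 < p"
    using p prime_gt_1_nat by blast
  define \<chi> where "\<chi> y = (SOME k :: int. \<exists>m\<in>M. y = m \<otimes> x [^] k) mod int p" for y
  have \<chi>_eq: "\<chi> (m \<otimes> x [^] k) = k mod int p" if m: "m \<in> M" for m and k :: int
  proof -
    define k' where "k' = (SOME k' :: int. \<exists>m'\<in>M. m \<otimes> x [^] k = m' \<otimes> x [^] k')"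
    have "\<exists>m'\<in>M. m \<otimes> x [^] k = m' \<otimes> x [^] k'"
      unfolding k'_def by (rule someI_ex) (use m in blast)
    then obtain m' where m': "m' \<in> M" "m \<otimes> x [^] k = m' \<otimes> x [^] k'" ..
    have \<chi>_def': "\<chi> (m \<otimes> x [^] k) = k' mod int p"
      by (simp add: \<chi>_def k'_def)
    have carr: "m \<in> carrier G" "m' \<in> carrier G"
      using m m'(1) subgroup.mem_carrier[OF M] by auto
    then have "m' = m \<otimes> x [^] k \<otimes> inv (x [^] k')"
      using m'(2) x(1) by (simp add: m_assoc)
    then have "x [^] (k - k') = inv m \<otimes> m'"
      using carr x(1) by (simp add: int_pow_diff m_assoc[symmetric])
    then have "x [^] (k - k') \<in> M"
      using m m'(1) M by (simp add: subgroup.m_closed subgroup.m_inv_closed)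
    then show ?thesis
      using int_pow_in_maximal_subgroup_iff[OF p ord max x] \<chi>_def'
      by (simp add: mod_eq_dvd_iff dvd_diff_commute)
  qed
  have rep: "\<exists>m\<in>M. \<exists>k::int. y = m \<otimes> x [^] k" if "y \<in> carrier G" for y
    using that maximal_subgroup_mult_powers[OF max x] by (auto simp: mult_powers_def)
  have "\<chi> \<in> hom G (integer_mod_group p)"
  proof (rule homI)
    fix y assume "y \<in> carrier G"
    then show "\<chi> y \<in> carrier (integer_mod_group p)"
      using p1 by (simp add: \<chi>_def carrier_integer_mod_group)
  next
    fix y z assume "y \<in> carrier G" "z \<in> carrier G"
    then obtain m m' and k k' :: int
      where yz: "m \<in> M" "y = m \<otimes> x [^] k" "m' \<in> M" "z = m' \<otimes> x [^] k'"
      using rep by meson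
    then have "y \<otimes> z = (m \<otimes> m') \<otimes> x [^] (k + k')"
      using subgroup.mem_carrier[OF M] x(1) by (simp add: int_pow_mult m_ac)
    then show "\<chi> (y \<otimes> z) = \<chi> y \<otimes>\<^bsub>integer_mod_group p\<^esub> \<chi> z"
      using yz \<chi>_eq subgroup.m_closed[OF M] by (simp add: mod_add_eq)
  qed
  moreover have "\<chi> x = 1"
    using \<chi>_eq[OF subgroup.one_closed[OF M], of 1] x(1) p1 by simp
  ultimately show ?thesis
    by blast
qed

end

lemma (in comm_group) exists_dual_basis_frattini:
  assumes fin: "finite (carrier G)" and p: "Factorial_Ring.prime p" and ord: "order G = p ^ n"
  shows "\<exists>d f g. dual_basis G p d f g \<and> order G \<le> p ^ d * card (frattini G)"
proof -
  define P where "P d \<longleftrightarrow> (\<exists>f g. dual_basis G p d f g)" for d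
  have p1: "1 < p"
    using p prime_gt_1_nat by blast
  have "dual_basis G p 0 f g" for f g
    using p1 by unfold_locales auto
  then have "P 0"
    by (auto simp: P_def)
  moreover have "d \<le> card (carrier G)" if "P d" for d
    using that dual_basis.length_le_card[OF _ fin] by (auto simp: P_def)
  ultimately obtain d where "P d" and max: "\<And>d'. P d' \<Longrightarrow> d' \<le> d"
    using GreatestI_nat[of P] Greatest_le_nat[of P] by metis
  then obtain f g where db: "dual_basis G p d f g"
    by (auto simp: P_def)
  interpret dual_basis G p d f g by (rule db)
  have "{x \<in> carrier G. \<forall>i<d. f i x = 0} \<subseteq> frattini G"
  proof (rule subsetI, rule ccontr)
    fix x assume x: "x \<in> {x \<in> carrier G. \<forall>i<d. f i x = 0}" "x \<notin> frattini G"
    then obtain M where "maximal_subgroup M G" "x \<notin> M"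
      by (auto simp: frattini_def)
    then obtain \<chi> where "\<chi> \<in> hom G (integer_mod_group p)" "\<chi> x = 1"
      using maximal_subgroup_character[OF p ord] x(1) by blast
    then have "P (Suc d)"
      using dual_basis_extend x(1) by (auto simp: P_def)
    then show False
      using max by fastforce
  qed
  then have "card {x \<in> carrier G. \<forall>i<d. f i x = 0} \<le> card (frattini G)"
    using fin by (intro card_mono) (auto simp: frattini_def)
  then have "order G \<le> p ^ d * card (frattini G)"
    using card_le_power_mult_card_common_kernel[OF fin] unfolding order_def by (meson le_trans mult_le_mono2)
  with db show ?thesis
    by blast
qed

lemma real_mult_pred: "real (x * (x - 1)) = real x * (real x - 1)"
  by (cases x) (auto simp: algebra_simps)

lemma real_triangular: "real (x * (x - 1) div 2) = real x * (real x - 1) / 2"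
proof -
  have "even (x * (x - 1))"
    by auto
  then show ?thesis
    using real_mult_pred[of x] by (simp add: real_of_nat_div)
qed

text \<open>With e = n - a, the quantity 2m is 2k - e(e - 1), so m is a natural number as soon
  as 2k \<ge> d(d - 1) for some d \<ge> e.\<close>

lemma formula_has_nat_solution:
  fixes n a d k :: nat
  assumes "1 \<le> a" "a \<le> n" "n \<le> d + a" "d * (d - 1) \<le> 2 * k"
  shows "\<exists>m::nat. real n
    = (real a * (real a + 1) + 2 * of_int (int (n * (n - 1) div 2) - int k) + 2 * real m) / (2 * real a)"
proof -
  define e where "e = n - a"
  have "e * (e - 1) \<le> d * (d - 1)"
    using assms(3) by (intro mult_le_mono) (auto simp: e_def)
  then have "real (e * (e - 1)) \<le> real (2 * k)"
    using assms(4) by linarith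
  then have e: "real e * (real e - 1) \<le> 2 * real k"
    by (cases "e = 0") auto
  define m where "m = k - e * (e - 1) div 2"
  have "2 * real m = 2 * real k - real e * (real e - 1)"
    using e real_triangular[of e] by (simp add: m_def)
  moreover have "real n = real e + real a"
    using assms(2) by (simp add: e_def)
  ultimately have "real n
    = (real a * (real a + 1) + 2 * of_int (int (n * (n - 1) div 2) - int k) + 2 * real m) / (2 * real a)"
    using assms(1) real_triangular[of n] by (simp add: field_simps)
  then show ?thesis ..
qed

theorem lemma2p1:
  fixes G :: "('a, 'b) monoid_scheme" and p n a k :: nat and t :: int
  assumes "Factorial_Ring.prime p"
    and "comm_group G"
    and "finite (carrier G)"
    and "order G = p ^ n"
    and "schur_multiplier_order G = p ^ k"
    and "t = int (n * (n - 1) div 2) - int k"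
    and "card (frattini G) = p ^ a"
    and "a \<ge> 1"
  shows "\<exists>m::nat. real n = (real a * (real a + 1) + 2 * of_int t + 2 * real m) / (2 * real a)"
proof -
  interpret comm_group G by fact
  have p1: "1 < p"
    using assms(1) prime_gt_1_nat by blast
  obtain d f g where db: "dual_basis G p d f g" and "order G \<le> p ^ d * card (frattini G)"
    using exists_dual_basis_frattini assms by blast
  then have "n \<le> d + a"
    using assms(4,7) p1 by (simp add: power_add[symmetric])
  moreover have "finite (schur_multiplier_carrier G)"
    using assms(5) p1 by (intro card_ge_0_finite) (simp add: schur_multiplier_order_def)
  then have "p ^ card (index_pairs d) \<le> p ^ k"
    using dual_basis.schur_multiplier_order_ge[OF db] assms(5) by simp
  then have "d * (d - 1) \<le> 2 * k"
    using p1 card_index_pairs[of d] by simp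
  moreover have "a \<le> n"
    using card_mono[OF assms(3), of "frattini G"] assms(4,7) p1 by (simp add: frattini_def order_def)
  ultimately show ?thesis
    using formula_has_nat_solution assms(6,8) by blast
qed

end
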